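(* Assume $\gcd(l,m)=1$, let $\mathcal G(\boldsymbol\nu,\boldsymbol\rho)$ be the regular $\boldsymbol\nu$-graph of the construction (with the unique $u_r,v_r$ making each $\mathcal A_r^t$ of slope $\alpha_{r+1}$ and each $\mathcal B_r^t$ of slope $-\beta_{r+1}$). Put $\Omega=\max_{1\le i\le l,\,1\le j\le m}(\alpha_i+\beta_j)$ and $\omega=\min_{1\le i\le l,\,1\le j\le m}(\alpha_i+\beta_j)$, and assume $\omega>0$. If $$\frac{\psi_r^n+1}{\psi_r^l+\psi_r^m}\ge\frac{\Omega}{\omega}\quad\text{for every }r\in\{0,\dots,k-1\},$$ then $v_r\ge u_r$ for all $0\le r<k$, and $\mathcal G(\boldsymbol\nu,\boldsymbol\rho)$ is proper.
   Context: Setting: $l,m$ positive integers, $n=l+m$, $k=\operatorname{lcm}(l,m)$, weights $\alpha_1,\dots,\alpha_l,\beta_1,\dots,\beta_m\ge0$ not all zero with $\sum\alpha_i=\sum\beta_j$, $\boldsymbol\nu=(\alpha_1,\dots,\alpha_l,-\beta_1,\dots,-\beta_m)$, $\boldsymbol\rho=(\rho_1,\dots,\rho_k)$ with all $\rho_i>1$. Indexing: for integer $r$, $\alpha_r:=\alpha_i$ ($1\le i\le l$, $r\equiv i\bmod l$), $\beta_r:=\beta_j$ ($1\le j\le m$, $r\equiv j\bmod m$), $\rho_r:=\rho_h$ ($1\le h\le k$, $r\equiv h\bmod k$); $u_r,v_r$ extended $k$-periodically. $\sigma_0=1$, $\sigma_r=\rho_1\cdots\rho_r$ ($1\le r\le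 k$), $\tau=\rho_1\cdots\rho_k$, $\sigma_{sk+h}=\tau^s\sigma_h$ ($s\in\mathbb Z$, $0\le h<k$); $\psi_r^s=\rho_{r+1}\cdots\rho_{r+s}$. Points ${\bf a}_r^t=\tau^t\sigma_r(1,u_r)$, ${\bf b}_r^t=\tau^t\sigma_r(1,v_r)$; segments $\mathcal A_r^t=[{\bf a}_r^t,{\bf b}_{r+l}^t]$, $\mathcal B_r^t=[{\bf b}_r^t,{\bf a}_{r+m}^t]$ ($0\le r<k$, $t\in\mathbb Z$); $\mathcal G(\boldsymbol\nu,\boldsymbol\rho)=\{{\bf 0}\}\cup\bigcup_{t,r}(\mathcal A_r^t\cup\mathcal B_r^t)$, which is the union of the graphs of functions $P_1\le\dots\le P_n$ on $[0,\infty)$. Such a system (graph) is proper if for each $q>0$ and each $i$ with $1\le i<n$ and $P_i(q)<P_{i+1}(q)$, the sum of the slopes of $P_1,\dots,P_i$ immediately to the left of $q$ does not exceed the sum of the slopes of $P_1,\dots,P_i$ immediately to the right of $q$. *)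

theory Defs
  imports "HOL-Analysis.Analysis"
begin

text \<open>Periodic extension of a 1-based family f_1..f_p to all integer indices:
  f_r := f_i with 1 \<le> i \<le> p and r \<equiv> i mod p.\<close>
definition ext1 :: "nat \<Rightarrow> (nat \<Rightarrow> real) \<Rightarrow> int \<Rightarrow> real" where
  "ext1 p f r = f (nat ((r - 1) mod int p) + 1)"

definition ext0 :: "nat \<Rightarrow> (nat \<Rightarrow> real) \<Rightarrow> int \<Rightarrow> real" where
  "ext0 p f r = f (nat (r mod int p))"

definition tau :: "nat \<Rightarrow> (nat \<Rightarrow> real) \<Rightarrow> real" where
  "tau k rho = (\<Prod>h=1..k. rho h)"

definition sig :: "nat \<Rightarrow> (nat \<Rightarrow> real) \<Rightarrow> int \<Rightarrow> real" where
  "sig k rho r = tau k rho powi (r div int k) * (\<Prod>h=1..nat (r mod int k). rho h)"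

definition psi :: "nat \<Rightarrow> (nat \<Rightarrow> real) \<Rightarrow> int \<Rightarrow> nat \<Rightarrow> real" where
  "psi k rho r s = (\<Prod>j=1..s. ext1 k rho (r + int j))"

text \<open>Points a_R = sigma_R (1, u_R), b_R = sigma_R (1, v_R) for a global index R \<in> Z;
  for R = r + t k (0 \<le> r < k) these are exactly a_r^t, b_r^t.\<close>
definition pa :: "nat \<Rightarrow> (nat \<Rightarrow> real) \<Rightarrow> (nat \<Rightarrow> real) \<Rightarrow> int \<Rightarrow> real \<times> real" where
  "pa k rho u R = (sig k rho R, sig k rho R * ext0 k u R)"

definition pb :: "nat \<Rightarrow> (nat \<Rightarrow> real) \<Rightarrow> (nat \<Rightarrow> real) \<Rightarrow> int \<Rightarrow> real \<times> real" where
  "pb k rho v R = (sig k rho R, sig k rho R * ext0 k v R)"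

definition Ggraph :: "nat \<Rightarrow> nat \<Rightarrow> (nat \<Rightarrow> real) \<Rightarrow> (nat \<Rightarrow> real) \<Rightarrow> (nat \<Rightarrow> real) \<Rightarrow> (real \<times> real) set" where
  "Ggraph l m rho u v = (let k = lcm l m in
     {0} \<union> (\<Union>R. closed_segment (pa k rho u R) (pb k rho v (R + int l))
                 \<union> closed_segment (pb k rho v R) (pa k rho u (R + int m))))"

definition segval :: "real \<times> real \<Rightarrow> real \<times> real \<Rightarrow> real \<Rightarrow> real" where
  "segval p q x = snd p + (x - fst p) * (snd q - snd p) / (fst q - fst p)"

text \<open>The functions P_1 \<le> ... \<le> P_n whose graphs make up G: for q > 0 with
  sigma_s \<le> q < sigma_{s+1}, the segments above q are A_R (s-l < R \<le> s) and
  B_R (s-m < R \<le> s); P_i(q) is the i-th smallest of these n values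
  (counted with multiplicity).\<close>
definition Pfun :: "nat \<Rightarrow> nat \<Rightarrow> (nat \<Rightarrow> real) \<Rightarrow> (nat \<Rightarrow> real) \<Rightarrow> (nat \<Rightarrow> real)
                    \<Rightarrow> nat \<Rightarrow> real \<Rightarrow> real" where
  "Pfun l m rho u v i q = (let k = lcm l m in
     if q \<le> 0 then 0 else
     (let s = (THE s::int. sig k rho s \<le> q \<and> q < sig k rho (s + 1)) in
       sort (map (\<lambda>R. segval (pa k rho u R) (pb k rho v (R + int l)) q) [s - int l + 1..s]
           @ map (\<lambda>R. segval (pb k rho v R) (pa k rho u (R + int m)) q) [s - int m + 1..s])
       ! (i - 1)))"

definition proper_system :: "nat \<Rightarrow> (nat \<Rightarrow> real \<Rightarrow> real) \<Rightarrow> bool" where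
  "proper_system n P \<longleftrightarrow>
     (\<forall>q>0. \<forall>i. 1 \<le> i \<and> i < n \<and> P i q < P (Suc i) q \<longrightarrow>
        (\<exists>dl dr. (\<forall>j\<in>{1..i}. (P j has_real_derivative dl j) (at q within {..q})
                            \<and> (P j has_real_derivative dr j) (at q within {q..}))
                 \<and> (\<Sum>j=1..i. dl j) \<le> (\<Sum>j=1..i. dr j)))"

end

theory Submission
  imports Defs
begin

text \<open>Write \<open>X\<^sub>R\<close>, \<open>Y\<^sub>R\<close> for the ordinates of \<open>a\<^sub>R\<close>, \<open>b\<^sub>R\<close>. Following \<open>A\<close>- and \<open>B\<close>-segments
  around the two paths from \<open>R\<close> to \<open>R + n\<close> shows that \<open>(Y - X)\<^bsub>R+n\<^esub> - (Y - X)\<^sub>R\<close> equals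
  \<open>\<sigma>\<^sub>R ((\<alpha>' + \<beta>') \<psi>\<^sup>n + (\<alpha> + \<beta>) - (\<alpha>' + \<beta>) \<psi>\<^sup>m - (\<alpha> + \<beta>') \<psi>\<^sup>l)\<close> with \<open>\<psi> = \<psi>\<^sub>R\<close>,
  \<open>\<alpha> = \<alpha>\<^bsub>R+1\<^esub>\<close>, \<open>\<alpha>' = \<alpha>\<^bsub>R+m+1\<^esub>\<close>, \<open>\<beta> = \<beta>\<^bsub>R+1\<^esub>\<close>, \<open>\<beta>' = \<beta>\<^bsub>R+l+1\<^esub>\<close>; every weight sum lies in
  \<open>[\<omega>, \<Omega>]\<close>, so the hypothesis makes this nonnegative. As \<open>R \<mapsto> R + k\<close> multiplies \<open>Y - X\<close>
  by \<open>\<tau> > 1\<close>, iterating over a full period gives \<open>(\<tau>\<^sup>n - 1)(Y - X)\<^sub>R \<ge> 0\<close>, i.e. \<open>u\<^sub>R \<le> v\<^sub>R\<close>.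

  Near any abscissa \<open>q\<close> the \<open>P\<^sub>i\<close> are the sorted values of finitely many lines, so when
  \<open>P\<^sub>i(q) < P\<^bsub>i+1\<^esub>(q)\<close> the one-sided slopes of \<open>P\<^sub>1, \<dots>, P\<^sub>i\<close> add up to the total slope of the lines
  lying below level \<open>P\<^sub>i(q)\<close>. The lines on the two sides differ only at a vertex abscissa \<open>\<sigma>\<^sub>s\<close>,
  where the lines through \<open>a\<^sub>s\<close> and \<open>b\<^sub>s\<close> exchange their slopes \<open>\<alpha>\<^bsub>s+1\<^esub> \<ge> 0\<close> and \<open>-\<beta>\<^bsub>s+1\<^esub> \<le> 0\<close>;
  since \<open>a\<^sub>s\<close> lies below \<open>b\<^sub>s\<close>, the lower lines can only gain slope from left to right.\<close>

section \<open>Sorted families of lines\<close>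

text \<open>The lexicographic order on lines is the order of their values on a right neighbourhood
  of \<open>0\<close>, so sorting lines sorts their values just right of \<open>0\<close>.\<close>

datatype line = Line (intercept: real) (gradient: real)

definition line_eval :: "line \<Rightarrow> real \<Rightarrow> real" where
  "line_eval p h = intercept p + gradient p * h"

instantiation line :: linorder
begin

definition less_eq_line :: "line \<Rightarrow> line \<Rightarrow> bool" where
  "p \<le> q \<longleftrightarrow> intercept p < intercept q \<or> intercept p = intercept q \<and> gradient p \<le> gradient q"

definition less_line :: "line \<Rightarrow> line \<Rightarrow> bool" where
  "p < q \<longleftrightarrow> intercept p < intercept q \<or> intercept p = intercept q \<and> gradient p < gradient q"

instance
proof
  fix p q r :: line
  show "p < q \<longleftrightarrow> p \<le> q \<and> \<not> q \<le> p" "p \<le> p" "p \<le> q \<or> q \<le> p"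
    unfolding less_eq_line_def less_line_def by auto
  show "p \<le> q \<Longrightarrow> q \<le> r \<Longrightarrow> p \<le> r"
    unfolding less_eq_line_def by auto
  show "p \<le> q \<Longrightarrow> q \<le> p \<Longrightarrow> p = q"
    unfolding less_eq_line_def by (cases p; cases q) auto
qed

end

definition line_reflect :: "line \<Rightarrow> line" where
  "line_reflect p = Line (intercept p) (- gradient p)"

lemma line_eval_reflect: "line_eval (line_reflect p) h = line_eval p (- h)"
  by (simp add: line_eval_def line_reflect_def)

lemma intercept_mono: "mono intercept"
  by (auto simp: mono_def less_eq_line_def)

lemma sort_map_mono:
  assumes "mono_on (set xs) f"
  shows "sort (map f xs) = map f (sort xs)"
  by (rule properties_for_sort) (use assms in \<open>auto intro: sorted_map_mono\<close>)

lemma line_le_imp_eventually_le: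
  assumes "p \<le> q"
  shows "\<forall>\<^sub>F h in at_right 0. line_eval p h \<le> line_eval q h"
proof (cases "intercept p < intercept q")
  case True
  have "((\<lambda>h. line_eval q h - line_eval p h) \<longlongrightarrow> intercept q - intercept p) (at_right 0)"
    unfolding line_eval_def by (auto intro!: tendsto_eq_intros)
  from order_tendstoD(1)[OF this, of 0] True show ?thesis
    by (auto elim: eventually_mono)
next
  case False
  with assms have "intercept p = intercept q" "gradient p \<le> gradient q"
    by (auto simp: less_eq_line_def)
  then show ?thesis
    using eventually_at_right_less[of "0::real"]
    by (auto simp: line_eval_def intro: mult_right_mono elim!: eventually_mono)
qed

lemma eventually_sort_line_eval:
  "\<forall>\<^sub>F h in at_right 0. sort (map (\<lambda>p. line_eval p h) ps) = map (\<lambda>p. line_eval p h) (sort ps)"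
proof -
  have "\<forall>\<^sub>F h in at_right 0. \<forall>(p, q) \<in> set ps \<times> set ps. p \<le> q \<longrightarrow> line_eval p h \<le> line_eval q h"
    using line_le_imp_eventually_le
    by (intro eventually_ball_finite) (auto intro: eventually_mono)
  then show ?thesis
    by eventually_elim (auto intro!: sort_map_mono simp: mono_on_def)
qed

lemma sort_map_intercept: "sort (map intercept ps) = map intercept (sort ps)"
  using intercept_mono by (intro sort_map_mono) (auto simp: mono_on_def mono_def)

definition lower_gradient_sum :: "real \<Rightarrow> line multiset \<Rightarrow> real" where
  "lower_gradient_sum c M = (\<Sum>p\<in>#filter_mset (\<lambda>p. intercept p \<le> c) M. gradient p)"

lemma lower_gradient_sum_union:
  "lower_gradient_sum c (M + N) = lower_gradient_sum c M + lower_gradient_sum c N"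
  by (simp add: lower_gradient_sum_def)

lemma lower_gradient_sum_reflect:
  "lower_gradient_sum c (image_mset line_reflect M) = - lower_gradient_sum c M"
  by (induction M) (auto simp: lower_gradient_sum_def line_reflect_def)

lemma sum_gradient_sorted_prefix:
  assumes sorted: "sorted ps" and i: "0 < i" "i < length ps"
    and gap: "intercept (ps ! (i - 1)) < intercept (ps ! i)"
  shows "(\<Sum>j<i. gradient (ps ! j)) = lower_gradient_sum (intercept (ps ! (i - 1))) (mset ps)"
proof -
  define c where "c = intercept (ps ! (i - 1))"
  have "sorted (map intercept ps)"
    using sorted intercept_mono by (intro sorted_map_mono) (auto simp: mono_on_def mono_def)
  then have mono: "intercept (ps ! a) \<le> intercept (ps ! b)" if "a \<le> b" "b < length ps" for a b
    using sorted_nth_mono[of "map intercept ps" a b] that by simp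
  have "filter (\<lambda>p. intercept p \<le> c) (take i ps) = take i ps"
  proof (rule filter_True, rule ballI)
    fix p assume "p \<in> set (take i ps)"
    then obtain j where "j < i" "p = ps ! j"
      using i by (auto simp: in_set_conv_nth)
    then show "intercept p \<le> c"
      using mono[of j "i - 1"] i by (simp add: c_def)
  qed
  moreover have "filter (\<lambda>p. intercept p \<le> c) (drop i ps) = []"
  proof (rule filter_False, rule ballI)
    fix p assume "p \<in> set (drop i ps)"
    then obtain j where j: "j < length ps - i" "p = ps ! (i + j)"
      by (auto simp: in_set_conv_nth)
    then have "intercept (ps ! i) \<le> intercept p"
      using mono[of i "i + j"] by simp
    then show "\<not> intercept p \<le> c"
      using gap by (simp add: c_def)
  qed
  ultimately have "filter (\<lambda>p. intercept p \<le> c) ps = take i ps"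
    by (metis append.right_neutral append_take_drop_id filter_append)
  then have "lower_gradient_sum c (mset ps) = (\<Sum>p\<leftarrow>take i ps. gradient p)"
    unfolding lower_gradient_sum_def by (metis mset_filter mset_map sum_mset_sum_list)
  also have "\<dots> = (\<Sum>j<i. gradient (ps ! j))"
    using i by (simp add: sum_list_sum_nth lessThan_atLeast0)
  finally show ?thesis
    by (simp add: c_def)
qed

lemma has_real_derivative_right_line:
  assumes "\<forall>\<^sub>F h in at_right 0. f (q + h) = line_eval p h" and "f q = intercept p"
  shows "(f has_real_derivative gradient p) (at q within {q..})"
proof -
  have "((\<lambda>x. line_eval p (x - q)) has_real_derivative gradient p) (at q within {q..})"
    unfolding line_eval_def by (auto intro!: derivative_eq_intros)
  moreover have "\<forall>\<^sub>F x in at q within {q..}. f x = line_eval p (x - q)"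
    using assms(1) unfolding at_within_Ici_at_right eventually_at_right_to_0[of _ q]
    by (simp add: add.commute)
  ultimately show ?thesis
    using assms(2) by (subst has_field_derivative_cong_eventually) (auto simp: line_eval_def)
qed

lemma has_real_derivative_left_line:
  assumes "\<forall>\<^sub>F h in at_right 0. f (q - h) = line_eval p h" and "f q = intercept p"
  shows "(f has_real_derivative - gradient p) (at q within {..q})"
proof -
  have "((\<lambda>x. line_eval p (q - x)) has_real_derivative - gradient p) (at q within {..q})"
    unfolding line_eval_def by (auto intro!: derivative_eq_intros)
  moreover have "\<forall>\<^sub>F x in at q within {..q}. f x = line_eval p (q - x)"
    using assms(1)
    unfolding at_within_Iic_at_left eventually_at_left_to_right eventually_at_right_to_0[of _ "- q"]
    by simp
  ultimately show ?thesis
    using assms(2) by (subst has_field_derivative_cong_eventually) (auto simp: line_eval_def)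
qed

lemma sort_mset_cong: "mset xs = mset ys \<Longrightarrow> sort xs = sort ys"
  by (metis mset_sort properties_for_sort sorted_sort)

lemma intercept_sort_nth: "j < length ps \<Longrightarrow> intercept (sort ps ! j) = sort (map intercept ps) ! j"
  by (simp add: sort_map_intercept)

lemma has_real_derivative_right_sorted_lines:
  assumes "\<forall>\<^sub>F h in at_right 0. f (q + h) = sort (map (\<lambda>p. line_eval p h) K) ! j"
    and "f q = sort (map intercept K) ! j" and "j < length K"
  shows "(f has_real_derivative gradient (sort K ! j)) (at q within {q..})"
proof (rule has_real_derivative_right_line)
  show "\<forall>\<^sub>F h in at_right 0. f (q + h) = line_eval (sort K ! j) h"
    using assms(1) eventually_sort_line_eval[of K] by eventually_elim (use assms(3) in simp)
  show "f q = intercept (sort K ! j)"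
    using assms(2,3) by (simp add: intercept_sort_nth)
qed

lemma has_real_derivative_left_sorted_lines:
  assumes "\<forall>\<^sub>F h in at_right 0. f (q - h) = sort (map (\<lambda>p. line_eval p (- h)) K) ! j"
    and "f q = sort (map intercept K) ! j" and "j < length K"
  shows "(f has_real_derivative - gradient (sort (map line_reflect K) ! j)) (at q within {..q})"
proof (rule has_real_derivative_left_line)
  show "\<forall>\<^sub>F h in at_right 0. f (q - h) = line_eval (sort (map line_reflect K) ! j) h"
    using assms(1) eventually_sort_line_eval[of "map line_reflect K"]
    by eventually_elim (use assms(3) in \<open>simp add: o_def line_eval_reflect\<close>)
  show "f q = intercept (sort (map line_reflect K) ! j)"
    using assms(2,3) intercept_sort_nth[of j "map line_reflect K"]
    by (simp add: o_def line_reflect_def)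
qed

lemma proper_at_of_line_germs:
  fixes F :: "nat \<Rightarrow> real \<Rightarrow> real" and KL KR :: "line list"
  assumes right: "\<forall>\<^sub>F h in at_right 0. \<forall>j. F j (q + h) = sort (map (\<lambda>p. line_eval p h) KR) ! (j - 1)"
    and left: "\<forall>\<^sub>F h in at_right 0. \<forall>j. F j (q - h) = sort (map (\<lambda>p. line_eval p (- h)) KL) ! (j - 1)"
    and at_q: "\<And>j. F j q = sort (map intercept KR) ! (j - 1)"
    and same_values: "mset (map intercept KL) = mset (map intercept KR)"
    and len: "length KL = n" "length KR = n"
    and i: "1 \<le> i" "i < n" and gap: "F i q < F (Suc i) q"
    and dominated: "lower_gradient_sum (F i q) (mset KL) \<le> lower_gradient_sum (F i q) (mset KR)"
  shows "\<exists>dl dr. (\<forall>j\<in>{1..i}. (F j has_real_derivative dl j) (at q within {..q})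
                          \<and> (F j has_real_derivative dr j) (at q within {q..}))
               \<and> (\<Sum>j=1..i. dl j) \<le> (\<Sum>j=1..i. dr j)"
proof -
  define SL SR where "SL = sort (map line_reflect KL)" and "SR = sort KR"
  define dl dr where "dl j = - gradient (SL ! (j - 1))" and "dr j = gradient (SR ! (j - 1))" for j
  have at_q_L: "F j q = sort (map intercept KL) ! (j - 1)" for j
    using at_q sort_mset_cong[OF same_values] by simp
  have "(F j has_real_derivative dl j) (at q within {..q})
      \<and> (F j has_real_derivative dr j) (at q within {q..})" if "j \<in> {1..i}" for j
    using that i len eventually_mono[OF left] eventually_mono[OF right] at_q_L at_q
    unfolding dl_def dr_def SL_def SR_def
    by (auto intro!: has_real_derivative_left_sorted_lines has_real_derivative_right_sorted_lines)
  moreover have "(\<Sum>j=1..i. dr j) = lower_gradient_sum (F i q) (mset KR)"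
    using sum_gradient_sorted_prefix[of SR i] i len gap at_q[of i] at_q[of "Suc i"]
    by (simp add: dr_def SR_def sum.atLeast1_atMost_eq intercept_sort_nth)
  moreover have "(\<Sum>j=1..i. dl j) = lower_gradient_sum (F i q) (mset KL)"
    using sum_gradient_sorted_prefix[of SL i] i len gap at_q_L[of i] at_q_L[of "Suc i"]
      intercept_sort_nth[of _ "map line_reflect KL"]
    by (simp add: dl_def SL_def sum.atLeast1_atMost_eq sum_negf o_def line_reflect_def
        lower_gradient_sum_reflect[of _ "mset KL", simplified])
  ultimately show ?thesis
    using dominated by (intro exI[of _ dl] exI[of _ dr]) auto
qed

lemma eventually_at_right_0_less: "0 < d \<Longrightarrow> \<forall>\<^sub>F h in at_right 0. 0 < h \<and> h < (d::real)"
  using eventually_at_right_less[of 0] order_tendstoD(2)[OF tendsto_ident_at, of 0 d "{0<..}"]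
  by (auto intro: eventually_conj)

section \<open>Periodic indexing and the scaling sequence \<open>\<sigma>\<close>\<close>

lemma ext1_periodic: "int p dvd d \<Longrightarrow> ext1 p f (r + d) = ext1 p f r"
  by (auto simp: ext1_def elim!: dvdE simp flip: diff_add_eq)

lemma ext0_periodic: "int p dvd d \<Longrightarrow> ext0 p f (r + d) = ext0 p f r"
  by (auto simp: ext0_def elim!: dvdE)

lemma ext0_of_nat: "r < p \<Longrightarrow> ext0 p f (int r) = f r"
  by (simp add: ext0_def)

lemma ext1_in_image:
  assumes "0 < p"
  shows "ext1 p f r \<in> f ` {1..p}"
proof -
  have "0 \<le> (r - 1) mod int p" "(r - 1) mod int p < int p"
    using assms by simp_all
  then show ?thesis
    unfolding ext1_def by (intro imageI) auto
qed

lemma ex_int_bracket: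
  fixes f :: "int \<Rightarrow> 'a::linorder"
  assumes "lo < hi" and "f lo \<le> x" and "x < f hi"
  shows "\<exists>s. f s \<le> x \<and> x < f (s + 1)"
  using assms(1,3)
proof (induction hi rule: int_gr_induct)
  case base
  then show ?case using assms(2) by blast
next
  case (step hi)
  show ?case
  proof (cases "x < f hi")
    case True
    then show ?thesis using step.IH by blast
  next
    case False
    then show ?thesis using step.prems by (intro exI[of _ hi]) auto
  qed
qed

locale rho_scale =
  fixes k :: nat and rho :: "nat \<Rightarrow> real"
  assumes k_pos: "0 < k" and rho_gt1: "\<forall>h\<in>{1..k}. 1 < rho h"
begin

abbreviation \<sigma> where "\<sigma> \<equiv> sig k rho"
abbreviation \<tau> where "\<tau> \<equiv> tau k rho"
abbreviation \<psi> where "\<psi> \<equiv> psi k rho"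

lemma decomp_mod_k: "R = int (nat (R mod int k)) + int k * (R div int k)" "nat (R mod int k) < k"
  using k_pos by (simp_all add: nat_less_iff)

lemma tau_gt1: "1 < \<tau>"
  unfolding tau_def using rho_gt1 k_pos by (intro less_1_prod) auto

lemma rho_prod_pos: "j \<le> k \<Longrightarrow> 0 < (\<Prod>h=1..j. rho h)"
  using rho_gt1 by (intro prod_pos) force

lemma ext1_rho_gt1: "1 < ext1 k rho R"
  using ext1_in_image[OF k_pos, of rho R] rho_gt1 by auto

lemma sig_decomp: "j < k \<Longrightarrow> \<sigma> (int k * t + int j) = \<tau> powi t * (\<Prod>h=1..j. rho h)"
  by (simp add: sig_def div_add1_eq)

lemma sig_shift: "\<sigma> (R + int k * t) = \<tau> powi t * \<sigma> R"
  using k_pos tau_gt1 by (simp add: sig_def power_int_add)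

lemma sig_pos: "0 < \<sigma> R"
  using k_pos tau_gt1 rho_prod_pos[of "nat (R mod int k)"]
  by (simp add: sig_def nat_le_iff order_less_imp_le)

lemma sig_Suc: "\<sigma> (R + 1) = ext1 k rho (R + 1) * \<sigma> R"
proof -
  define t where "t = R div int k"
  define j where "j = nat (R mod int k)"
  have j: "j < k" and R: "R = int k * t + int j"
    using k_pos by (simp_all add: t_def j_def nat_less_iff)
  have rho_next: "ext1 k rho (R + 1) = rho (j + 1)"
    by (simp add: ext1_def j_def)
  show ?thesis
  proof (cases "j + 1 < k")
    case True
    then have "\<sigma> (R + 1) = \<tau> powi t * (\<Prod>h=1..j+1. rho h)"
      using sig_decomp[of "j + 1" t] R by (simp add: ac_simps)
    then show ?thesis
      using rho_next R sig_decomp[OF j] by (simp add: prod.nat_ivl_Suc')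
  next
    case False
    then have jk: "k = j + 1" using j by simp
    have "\<sigma> (R + 1) = \<tau> powi (t + 1)"
      using sig_decomp[of 0 "t + 1"] k_pos R jk by (simp add: algebra_simps)
    also have "\<dots> = \<tau> powi t * \<tau>"
      using tau_gt1 by (simp add: power_int_add)
    also have "\<dots> = \<tau> powi t * ((\<Prod>h=1..j. rho h) * rho (j + 1))"
      using jk by (simp add: tau_def prod.nat_ivl_Suc')
    finally show ?thesis
      using rho_next R sig_decomp[OF j] by simp
  qed
qed

lemma sig_add_psi: "\<sigma> (R + int s) = \<psi> R s * \<sigma> R"
proof (induction s)
  case 0
  then show ?case by (simp add: psi_def)
next
  case (Suc s)
  have "\<sigma> (R + int (Suc s)) = ext1 k rho (R + int s + 1) * \<sigma> (R + int s)"
    using sig_Suc[of "R + int s"] by (simp add: ac_simps)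
  then show ?case
    using Suc by (simp add: psi_def prod.nat_ivl_Suc' algebra_simps)
qed

lemma psi_ge1: "1 \<le> \<psi> R s"
  unfolding psi_def using ext1_rho_gt1 by (intro prod_ge_1) (auto intro: less_imp_le)

lemma psi_gt1: "1 \<le> s \<Longrightarrow> 1 < \<psi> R s"
  unfolding psi_def using ext1_rho_gt1 by (intro less_1_prod) auto

lemma psi_periodic: "\<psi> (R + int k * t) s = \<psi> R s"
proof -
  have "ext1 k rho (R + int k * t + int j) = ext1 k rho (R + int j)" for j
    using ext1_periodic[of k "int k * t" rho "R + int j"] by (simp add: ac_simps)
  then show ?thesis
    unfolding psi_def by simp
qed

lemma sig_strict_mono: "strict_mono \<sigma>"
proof (rule strict_monoI)
  fix a b :: int
  assume "a < b"
  then have "b = a + int (nat (b - a))" "1 \<le> nat (b - a)" by auto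
  then show "\<sigma> a < \<sigma> b"
    using sig_add_psi[of a "nat (b - a)"] psi_gt1[of "nat (b - a)" a] sig_pos[of a]
    by simp
qed

lemma sig_less_add: "0 < d \<Longrightarrow> \<sigma> R < \<sigma> (R + int d)"
  using strict_mono_less[OF sig_strict_mono] by simp

lemma eq_by_scaling:
  assumes "\<And>r. r < k \<Longrightarrow> f (int r) = g (int r)"
    and "\<And>R t. f (R + int k * t) = \<tau> powi t * f R"
    and "\<And>R t. g (R + int k * t) = \<tau> powi t * g R"
  shows "f R = g R"
  using assms decomp_mod_k[of R] by metis

lemma sig_zero: "\<sigma> 0 = 1"
  by (simp add: sig_def)

lemma sig_mult_k: "\<sigma> (int k * t) = \<tau> powi t"
  using sig_shift[of 0 t] sig_zero by simp

lemma sig_bracket_exists: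
  assumes "0 < x"
  shows "\<exists>s. \<sigma> s \<le> x \<and> x < \<sigma> (s + 1)"
proof -
  obtain N1 where N1: "inverse x < \<tau> ^ N1"
    using real_arch_pow[OF tau_gt1] by blast
  obtain N2 where N2: "x < \<tau> ^ N2"
    using real_arch_pow[OF tau_gt1] by blast
  have "\<sigma> (int k * - int N1) = inverse (\<tau> ^ N1)"
    by (simp only: sig_mult_k) (simp add: power_int_minus)
  also have "\<dots> < inverse (inverse x)"
    using N1 assms by (intro less_imp_inverse_less) auto
  finally have lo: "\<sigma> (int k * - int N1) \<le> x"
    by simp
  have hi: "x < \<sigma> (int k * int N2)"
    using N2 by (simp only: sig_mult_k) simp
  have "int k * - int N1 < int k * int N2"
    using lo hi strict_mono_less[OF sig_strict_mono] by fastforce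
  then show ?thesis
    using ex_int_bracket lo hi by blast
qed

lemma the_sig_bracket:
  assumes "\<sigma> s \<le> x" and "x < \<sigma> (s + 1)"
  shows "(THE s. \<sigma> s \<le> x \<and> x < \<sigma> (s + 1)) = s"
proof (rule the_equality)
  fix s' assume s': "\<sigma> s' \<le> x \<and> x < \<sigma> (s' + 1)"
  then have "s' < s + 1" "s < s' + 1"
    using assms strict_mono_less[OF sig_strict_mono] by fastforce+
  then show "s' = s" by simp
qed (use assms in simp)

end

section \<open>Vertex heights of the graph\<close>

locale nu_graph = rho_scale k rho for k rho +
  fixes l m :: nat and alpha beta u v :: "nat \<Rightarrow> real"
  assumes l_pos: "0 < l" and m_pos: "0 < m" and k_eq: "k = lcm l m"
    and slope_A: "\<forall>r<k. (sig k rho (int r + int l) * ext0 k v (int r + int l)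
                          - sig k rho (int r) * u r)
                        / (sig k rho (int r + int l) - sig k rho (int r))
                      = ext1 l alpha (int r + 1)"
    and slope_B: "\<forall>r<k. (sig k rho (int r + int m) * ext0 k u (int r + int m)
                          - sig k rho (int r) * v r)
                        / (sig k rho (int r + int m) - sig k rho (int r))
                      = - ext1 m beta (int r + 1)"
begin

abbreviation alpha_at where "alpha_at \<equiv> ext1 l alpha"
abbreviation beta_at where "beta_at \<equiv> ext1 m beta"

definition height_a :: "int \<Rightarrow> real" where
  "height_a R = \<sigma> R * ext0 k u R"

definition height_b :: "int \<Rightarrow> real" where
  "height_b R = \<sigma> R * ext0 k v R"

lemma l_dvd_k: "int l dvd int k" and m_dvd_k: "int m dvd int k"
  by (simp_all add: k_eq)

lemma height_a_shift: "height_a (R + int k * t) = \<tau> powi t * height_a R"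
  by (simp add: height_a_def sig_shift ext0_periodic)

lemma height_b_shift: "height_b (R + int k * t) = \<tau> powi t * height_b R"
  by (simp add: height_b_def sig_shift ext0_periodic)

lemma rise_A: "height_b (R + int l) - height_a R = alpha_at (R + 1) * (\<sigma> (R + int l) - \<sigma> R)"
proof (rule eq_by_scaling[of "\<lambda>R. height_b (R + int l) - height_a R"
                           "\<lambda>R. alpha_at (R + 1) * (\<sigma> (R + int l) - \<sigma> R)"])
  fix r assume "r < k"
  then show "height_b (int r + int l) - height_a (int r)
      = alpha_at (int r + 1) * (\<sigma> (int r + int l) - \<sigma> (int r))"
    using slope_A sig_less_add[OF l_pos, of "int r"]
    by (auto simp: height_a_def height_b_def ext0_of_nat field_simps)
next
  fix R t
  show "height_b (R + int k * t + int l) - height_a (R + int k * t)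
      = \<tau> powi t * (height_b (R + int l) - height_a R)"
    using height_b_shift[of "R + int l" t] height_a_shift[of R t] by (simp add: algebra_simps)
  show "alpha_at (R + int k * t + 1) * (\<sigma> (R + int k * t + int l) - \<sigma> (R + int k * t))
      = \<tau> powi t * (alpha_at (R + 1) * (\<sigma> (R + int l) - \<sigma> R))"
    using ext1_periodic[of l "int k * t" alpha "R + 1"] dvd_mult2[OF l_dvd_k, of t]
      sig_shift[of "R + int l" t] sig_shift[of R t]
    by (simp add: algebra_simps)
qed

lemma rise_B: "height_a (R + int m) - height_b R = - beta_at (R + 1) * (\<sigma> (R + int m) - \<sigma> R)"
proof (rule eq_by_scaling[of "\<lambda>R. height_a (R + int m) - height_b R"
                           "\<lambda>R. - beta_at (R + 1) * (\<sigma> (R + int m) - \<sigma> R)"])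
  fix r assume "r < k"
  then show "height_a (int r + int m) - height_b (int r)
      = - beta_at (int r + 1) * (\<sigma> (int r + int m) - \<sigma> (int r))"
    using slope_B sig_less_add[OF m_pos, of "int r"]
    by (auto simp: height_a_def height_b_def ext0_of_nat field_simps)
next
  fix R t
  show "height_a (R + int k * t + int m) - height_b (R + int k * t)
      = \<tau> powi t * (height_a (R + int m) - height_b R)"
    using height_a_shift[of "R + int m" t] height_b_shift[of R t] by (simp add: algebra_simps)
  show "- beta_at (R + int k * t + 1) * (\<sigma> (R + int k * t + int m) - \<sigma> (R + int k * t))
      = \<tau> powi t * (- beta_at (R + 1) * (\<sigma> (R + int m) - \<sigma> R))"
    using ext1_periodic[of m "int k * t" beta "R + 1"] dvd_mult2[OF m_dvd_k, of t]
      sig_shift[of "R + int m" t] sig_shift[of R t]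
    by (simp add: algebra_simps)
qed

definition gap :: "int \<Rightarrow> real" where
  "gap R = height_b R - height_a R"

lemma gap_add_l_m:
  "gap (R + int (l + m)) - gap R = \<sigma> R *
     ((alpha_at (R + int m + 1) + beta_at (R + int l + 1)) * \<psi> R (l + m)
      + (alpha_at (R + 1) + beta_at (R + 1))
      - (alpha_at (R + int m + 1) + beta_at (R + 1)) * \<psi> R m
      - (alpha_at (R + 1) + beta_at (R + int l + 1)) * \<psi> R l)"
proof -
  have shifts: "R + int m + int l = R + int (l + m)" "R + int l + int m = R + int (l + m)"
    by simp_all
  have "height_b (R + int l) - height_a R = alpha_at (R + 1) * (\<psi> R l - 1) * \<sigma> R"
    using rise_A[of R] sig_add_psi[of R l] by (simp add: algebra_simps)
  moreover have "height_b (R + int (l + m)) - height_a (R + int m)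
      = alpha_at (R + int m + 1) * (\<psi> R (l + m) - \<psi> R m) * \<sigma> R"
    using rise_A[of "R + int m"] sig_add_psi[of R m] sig_add_psi[of R "l + m"] shifts
    by (simp add: algebra_simps)
  moreover have "height_a (R + int m) - height_b R = - beta_at (R + 1) * (\<psi> R m - 1) * \<sigma> R"
    using rise_B[of R] sig_add_psi[of R m] by (simp add: algebra_simps)
  moreover have "height_a (R + int (l + m)) - height_b (R + int l)
      = - beta_at (R + int l + 1) * (\<psi> R (l + m) - \<psi> R l) * \<sigma> R"
    using rise_B[of "R + int l"] sig_add_psi[of R l] sig_add_psi[of R "l + m"] shifts
    by (simp add: algebra_simps)
  ultimately show ?thesis
    unfolding gap_def by (simp add: algebra_simps)
qed

lemma gap_step:
  assumes lower: "\<And>R R'. \<omega> \<le> alpha_at R + beta_at R'"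
    and upper: "\<And>R R'. alpha_at R + beta_at R' \<le> \<Omega>"
    and cond: "\<Omega> * (\<psi> R l + \<psi> R m) \<le> \<omega> * (\<psi> R (l + m) + 1)"
  shows "gap R \<le> gap (R + int (l + m))"
proof -
  define pl pm pn where "pl = \<psi> R l" and "pm = \<psi> R m" and "pn = \<psi> R (l + m)"
  define a a' b b' where "a = alpha_at (R + 1)" and "a' = alpha_at (R + int m + 1)"
    and "b = beta_at (R + 1)" and "b' = beta_at (R + int l + 1)"
  have "0 \<le> pl" "0 \<le> pm" "0 \<le> pn"
    using psi_ge1 by (auto simp: pl_def pm_def pn_def intro: order_trans[OF zero_le_one])
  then have "\<omega> * pn \<le> (a' + b') * pn" "\<omega> \<le> a + b"
    "(a' + b) * pm \<le> \<Omega> * pm" "(a + b') * pl \<le> \<Omega> * pl"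
    using lower upper by (auto simp: a_def a'_def b_def b'_def intro: mult_right_mono)
  then have "0 \<le> (a' + b') * pn + (a + b) - (a' + b) * pm - (a + b') * pl"
    using cond by (simp add: pl_def pm_def pn_def algebra_simps)
  then have "0 \<le> gap (R + int (l + m)) - gap R"
    using gap_add_l_m[of R] sig_pos[of R]
    by (simp add: a_def a'_def b_def b'_def pl_def pm_def pn_def)
  then show ?thesis
    by simp
qed

lemma gap_nonneg:
  assumes lower: "\<And>R R'. \<omega> \<le> alpha_at R + beta_at R'"
    and upper: "\<And>R R'. alpha_at R + beta_at R' \<le> \<Omega>"
    and cond: "\<And>r. r < k \<Longrightarrow> \<Omega> * (\<psi> (int r) l + \<psi> (int r) m) \<le> \<omega> * (\<psi> (int r) (l + m) + 1)"
  shows "0 \<le> gap R"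
proof -
  have step: "gap R' \<le> gap (R' + int (l + m))" for R'
  proof (rule gap_step[OF lower upper])
    show "\<Omega> * (\<psi> R' l + \<psi> R' m) \<le> \<omega> * (\<psi> R' (l + m) + 1)"
      using cond[OF decomp_mod_k(2)[of R']] psi_periodic decomp_mod_k(1)[of R'] by metis
  qed
  have iter: "gap R \<le> gap (R + int (l + m) * int j)" for j
  proof (induction j)
    case (Suc j)
    then show ?case
      using step[of "R + int (l + m) * int j"] by (simp add: algebra_simps)
  qed simp
  have "gap (R + int (l + m) * int k) = \<tau> powi int (l + m) * gap R"
    using height_a_shift[of R "int (l + m)"] height_b_shift[of R "int (l + m)"]
    by (simp add: gap_def algebra_simps)
  then have "gap (R + int (l + m) * int k) = \<tau> ^ (l + m) * gap R"
    by (simp only: power_int_of_nat)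
  with iter[of k] have "0 \<le> (\<tau> ^ (l + m) - 1) * gap R"
    by (simp add: algebra_simps)
  moreover have "1 < \<tau> ^ (l + m)"
    using tau_gt1 l_pos by (simp add: one_less_power)
  ultimately show ?thesis
    by (simp add: zero_le_mult_iff)
qed

lemma u_le_v:
  assumes weights: "\<And>i j. i \<in> {1..l} \<Longrightarrow> j \<in> {1..m} \<Longrightarrow> \<omega> \<le> alpha i + beta j \<and> alpha i + beta j \<le> \<Omega>"
    and cond: "\<And>r. r < k \<Longrightarrow> \<Omega> * (\<psi> (int r) l + \<psi> (int r) m) \<le> \<omega> * (\<psi> (int r) (l + m) + 1)"
    and r: "r < k"
  shows "u r \<le> v r"
proof -
  have "\<omega> \<le> alpha_at R + beta_at R' \<and> alpha_at R + beta_at R' \<le> \<Omega>" for R R'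
    using ext1_in_image[OF l_pos, of alpha R] ext1_in_image[OF m_pos, of beta R'] weights by auto
  then have "0 \<le> gap (int r)"
    using cond by (intro gap_nonneg) auto
  then show ?thesis
    using sig_pos[of "int r"] r
    by (simp add: gap_def height_a_def height_b_def ext0_of_nat zero_le_mult_iff
        flip: right_diff_distrib)
qed

end

section \<open>Properness\<close>

lemma lower_gradient_sum_swap:
  assumes "y0 \<le> y1" and "0 \<le> a" and "0 \<le> b"
  shows "lower_gradient_sum c {#Line y1 a, Line y0 (- b)#} \<le> lower_gradient_sum c {#Line y0 a, Line y1 (- b)#}"
  using assms by (auto simp: lower_gradient_sum_def)

definition seg_slope :: "(real \<times> real) \<times> (real \<times> real) \<Rightarrow> real" where
  "seg_slope g = (snd (snd g) - snd (fst g)) / (fst (snd g) - fst (fst g))"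

definition seg_line :: "real \<Rightarrow> (real \<times> real) \<times> (real \<times> real) \<Rightarrow> line" where
  "seg_line q g = Line (segval (fst g) (snd g) q) (seg_slope g)"

lemma segval_eq_line_eval: "segval (fst g) (snd g) x = line_eval (seg_line q g) (x - q)"
proof -
  have "(x - a) * e / d = (q - a) * e / d + e / d * (x - q)" for a d e :: real
    by (cases "d = 0") (simp_all add: field_simps)
  then show ?thesis
    by (simp add: seg_line_def seg_slope_def segval_def line_eval_def)
qed

context nu_graph
begin

definition seg_A :: "int \<Rightarrow> (real \<times> real) \<times> (real \<times> real)" where
  "seg_A R = (pa k rho u R, pb k rho v (R + int l))"

definition seg_B :: "int \<Rightarrow> (real \<times> real) \<times> (real \<times> real)" where
  "seg_B R = (pb k rho v R, pa k rho u (R + int m))"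

definition segs_over :: "int \<Rightarrow> ((real \<times> real) \<times> (real \<times> real)) list" where
  "segs_over s = map seg_A [s - int l + 1..s] @ map seg_B [s - int m + 1..s]"

lemma length_segs_over: "length (segs_over s) = l + m"
  by (simp add: segs_over_def)

lemma Pfun_eq:
  assumes "\<sigma> s \<le> x" and "x < \<sigma> (s + 1)"
  shows "Pfun l m rho u v i x = sort (map (\<lambda>g. segval (fst g) (snd g) x) (segs_over s)) ! (i - 1)"
proof -
  have "0 < x"
    using sig_pos[of s] assms by simp
  then show ?thesis
    unfolding Pfun_def Let_def k_eq[symmetric] the_sig_bracket[OF assms]
    by (simp add: segs_over_def seg_A_def seg_B_def o_def)
qed

lemma pa_eq: "pa k rho u R = (\<sigma> R, height_a R)"
  by (simp add: pa_def height_a_def)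

lemma pb_eq: "pb k rho v R = (\<sigma> R, height_b R)"
  by (simp add: pb_def height_b_def)

lemma seg_slope_A: "seg_slope (seg_A R) = alpha_at (R + 1)"
  using rise_A[of R] sig_less_add[OF l_pos, of R]
  by (simp add: seg_slope_def seg_A_def pa_eq pb_eq)

lemma seg_slope_B: "seg_slope (seg_B R) = - beta_at (R + 1)"
  using rise_B[of R] sig_less_add[OF m_pos, of R]
  by (simp add: seg_slope_def seg_B_def pa_eq pb_eq)

lemma seg_line_A_start: "seg_line (\<sigma> R) (seg_A R) = Line (height_a R) (alpha_at (R + 1))"
  by (simp add: seg_line_def seg_slope_A) (simp add: seg_A_def pa_eq segval_def)

lemma seg_line_B_start: "seg_line (\<sigma> R) (seg_B R) = Line (height_b R) (- beta_at (R + 1))"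
  by (simp add: seg_line_def seg_slope_B) (simp add: seg_B_def pb_eq segval_def)

lemma seg_line_A_end: "seg_line (\<sigma> (R + int l)) (seg_A R) = Line (height_b (R + int l)) (alpha_at (R + 1))"
  using sig_less_add[OF l_pos, of R]
  by (simp add: seg_line_def seg_slope_A) (simp add: seg_A_def pa_eq pb_eq segval_def)

lemma seg_line_B_end: "seg_line (\<sigma> (R + int m)) (seg_B R) = Line (height_a (R + int m)) (- beta_at (R + 1))"
  using sig_less_add[OF m_pos, of R]
  by (simp add: seg_line_def seg_slope_B) (simp add: seg_B_def pa_eq pb_eq segval_def)

text \<open>At the abscissa \<open>\<sigma>\<^sub>s\<close> the segments \<open>A\<^bsub>s-l\<^esub>\<close>, \<open>B\<^bsub>s-m\<^esub>\<close> end at \<open>b\<^sub>s\<close>, \<open>a\<^sub>s\<close>, and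
  \<open>A\<^sub>s\<close>, \<open>B\<^sub>s\<close> start at \<open>a\<^sub>s\<close>, \<open>b\<^sub>s\<close> with the same slopes; all other segments pass through.\<close>

lemma breakpoint_lines:
  "mset (map (seg_line (\<sigma> s)) (segs_over (s - 1)))
     + {#Line (height_a s) (alpha_at (s + 1)), Line (height_b s) (- beta_at (s + 1))#}
   = mset (map (seg_line (\<sigma> s)) (segs_over s))
     + {#Line (height_b s) (alpha_at (s + 1)), Line (height_a s) (- beta_at (s + 1))#}"
proof -
  have "[s - int l..s - 1] = (s - int l) # [s - int l + 1..s - 1]"
    "[s - int m..s - 1] = (s - int m) # [s - int m + 1..s - 1]"
    using l_pos m_pos by (simp_all add: upto_rec1)
  moreover have "[s - int l + 1..s] = [s - int l + 1..s - 1] @ [s]"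
    "[s - int m + 1..s] = [s - int m + 1..s - 1] @ [s]"
    using l_pos m_pos by (simp_all add: upto_rec2)
  moreover have "seg_line (\<sigma> s) (seg_A (s - int l)) = Line (height_b s) (alpha_at (s + 1))"
    using seg_line_A_end[of "s - int l"] ext1_periodic[of l "int l" alpha "s - int l + 1"]
    by (simp add: algebra_simps)
  moreover have "seg_line (\<sigma> s) (seg_B (s - int m)) = Line (height_a s) (- beta_at (s + 1))"
    using seg_line_B_end[of "s - int m"] ext1_periodic[of m "int m" beta "s - int m + 1"]
    by (simp add: algebra_simps)
  ultimately show ?thesis
    by (simp add: segs_over_def seg_line_A_start seg_line_B_start add_mset_commute)
qed

lemma Pfun_right_germ:
  assumes "\<sigma> s \<le> q" and "q < \<sigma> (s + 1)"
  shows "\<forall>\<^sub>F h in at_right 0. \<forall>j. Pfun l m rho u v j (q + h)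
           = sort (map (\<lambda>p. line_eval p h) (map (seg_line q) (segs_over s))) ! (j - 1)"
proof (rule eventually_mono[OF eventually_at_right_0_less])
  fix h assume "0 < h \<and> h < \<sigma> (s + 1) - q"
  then have "\<sigma> s \<le> q + h" "q + h < \<sigma> (s + 1)"
    using assms by auto
  then show "\<forall>j. Pfun l m rho u v j (q + h)
      = sort (map (\<lambda>p. line_eval p h) (map (seg_line q) (segs_over s))) ! (j - 1)"
    by (simp add: Pfun_eq o_def segval_eq_line_eval[of _ _ q])
qed (use assms in simp)

lemma Pfun_left_germ:
  assumes "\<sigma> s < q" and "q \<le> \<sigma> (s + 1)"
  shows "\<forall>\<^sub>F h in at_right 0. \<forall>j. Pfun l m rho u v j (q - h)
           = sort (map (\<lambda>p. line_eval p (- h)) (map (seg_line q) (segs_over s))) ! (j - 1)"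
proof (rule eventually_mono[OF eventually_at_right_0_less])
  fix h assume "0 < h \<and> h < q - \<sigma> s"
  then have "\<sigma> s \<le> q - h" "q - h < \<sigma> (s + 1)"
    using assms by auto
  then show "\<forall>j. Pfun l m rho u v j (q - h)
      = sort (map (\<lambda>p. line_eval p (- h)) (map (seg_line q) (segs_over s))) ! (j - 1)"
    by (simp add: Pfun_eq o_def segval_eq_line_eval[of _ _ q])
qed (use assms in simp)

lemma Pfun_at:
  assumes "\<sigma> s \<le> q" and "q < \<sigma> (s + 1)"
  shows "Pfun l m rho u v j q = sort (map intercept (map (seg_line q) (segs_over s))) ! (j - 1)"
  using assms by (simp add: Pfun_eq o_def segval_eq_line_eval[of _ _ q] line_eval_def)

lemma breakpoint_intercepts:
  "mset (map intercept (map (seg_line (\<sigma> s)) (segs_over (s - 1))))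
   = mset (map intercept (map (seg_line (\<sigma> s)) (segs_over s)))"
  using arg_cong[OF breakpoint_lines[of s], of "image_mset intercept"]
  by (simp add: add_mset_commute image_mset.compositionality)

lemma height_a_le_b:
  assumes "\<And>r. r < k \<Longrightarrow> u r \<le> v r"
  shows "height_a R \<le> height_b R"
  using assms[OF decomp_mod_k(2)[of R]] sig_pos[of R]
  by (simp add: height_a_def height_b_def ext0_def)

lemma breakpoint_gradient_sum_le:
  assumes alpha_nonneg: "\<And>i. i \<in> {1..l} \<Longrightarrow> 0 \<le> alpha i"
    and beta_nonneg: "\<And>j. j \<in> {1..m} \<Longrightarrow> 0 \<le> beta j"
    and u_le_v: "\<And>r. r < k \<Longrightarrow> u r \<le> v r"
  shows "lower_gradient_sum c (mset (map (seg_line (\<sigma> s)) (segs_over (s - 1))))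
         \<le> lower_gradient_sum c (mset (map (seg_line (\<sigma> s)) (segs_over s)))"
proof -
  have "0 \<le> alpha_at (s + 1)" "0 \<le> beta_at (s + 1)"
    using ext1_in_image[OF l_pos, of alpha "s + 1"] ext1_in_image[OF m_pos, of beta "s + 1"]
      alpha_nonneg beta_nonneg by auto
  then have "lower_gradient_sum c
        {#Line (height_b s) (alpha_at (s + 1)), Line (height_a s) (- beta_at (s + 1))#}
      \<le> lower_gradient_sum c
        {#Line (height_a s) (alpha_at (s + 1)), Line (height_b s) (- beta_at (s + 1))#}"
    using height_a_le_b[OF u_le_v] by (intro lower_gradient_sum_swap)
  moreover note
    arg_cong[OF breakpoint_lines[of s], of "lower_gradient_sum c", unfolded lower_gradient_sum_union]
  ultimately show ?thesis
    by linarith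
qed

lemma proper_system_Pfun:
  assumes alpha_nonneg: "\<And>i. i \<in> {1..l} \<Longrightarrow> 0 \<le> alpha i"
    and beta_nonneg: "\<And>j. j \<in> {1..m} \<Longrightarrow> 0 \<le> beta j"
    and u_le_v: "\<And>r. r < k \<Longrightarrow> u r \<le> v r"
  shows "proper_system (l + m) (Pfun l m rho u v)"
  unfolding proper_system_def
proof (intro allI impI)
  fix q :: real and i :: nat
  assume q: "0 < q" and "1 \<le> i \<and> i < l + m \<and> Pfun l m rho u v i q < Pfun l m rho u v (Suc i) q"
  then have i: "1 \<le> i" "i < l + m" and gap: "Pfun l m rho u v i q < Pfun l m rho u v (Suc i) q"
    by auto
  obtain s where s: "\<sigma> s \<le> q" "q < \<sigma> (s + 1)"
    using sig_bracket_exists[OF q] by blast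
  define s' where "s' = (if q = \<sigma> s then s - 1 else s)"
    \<comment> \<open>left of \<open>q\<close> we are over \<open>[\<sigma>\<^bsub>s'\<^esub>, \<sigma>\<^bsub>s'+1\<^esub>]\<close>\<close>
  have s': "\<sigma> s' < q" "q \<le> \<sigma> (s' + 1)"
    using s strict_mono_less[OF sig_strict_mono, of "s - 1" s] by (auto simp: s'_def)
  let ?KL = "map (seg_line q) (segs_over s')" and ?KR = "map (seg_line q) (segs_over s)"
  have same_values: "mset (map intercept ?KL) = mset (map intercept ?KR)"
    using breakpoint_intercepts[of s] by (simp add: s'_def)
  have dominated: "lower_gradient_sum c (mset ?KL) \<le> lower_gradient_sum c (mset ?KR)" for c
    using breakpoint_gradient_sum_le[OF alpha_nonneg beta_nonneg u_le_v, of c s]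
    by (simp add: s'_def)
  show "\<exists>dl dr. (\<forall>j\<in>{1..i}. (Pfun l m rho u v j has_real_derivative dl j) (at q within {..q})
                          \<and> (Pfun l m rho u v j has_real_derivative dr j) (at q within {q..}))
               \<and> (\<Sum>j=1..i. dl j) \<le> (\<Sum>j=1..i. dr j)"
    by (rule proper_at_of_line_germs[OF Pfun_right_germ[OF s] Pfun_left_germ[OF s'] Pfun_at[OF s]
          same_values _ _ i gap dominated]) (simp_all add: length_segs_over)
qed

end

theorem proposition3p1:
  fixes l m k n :: nat
    and alpha beta rho u v :: "nat \<Rightarrow> real"
  assumes lpos: "l > 0" and mpos: "m > 0"
    and cop: "coprime l m"
    and kdef: "k = lcm l m" and ndef: "n = l + m"
    and alpha_nn: "\<forall>i\<in>{1..l}. alpha i \<ge> 0"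
    and beta_nn: "\<forall>j\<in>{1..m}. beta j \<ge> 0"
    and not_all_zero: "(\<exists>i\<in>{1..l}. alpha i \<noteq> 0) \<or> (\<exists>j\<in>{1..m}. beta j \<noteq> 0)"
    and sum_eq: "(\<Sum>i=1..l. alpha i) = (\<Sum>j=1..m. beta j)"
    and rho_gt1: "\<forall>h\<in>{1..k}. rho h > 1"
    and slopeA: "\<forall>r<k. (sig k rho (int r + int l) * ext0 k v (int r + int l)
                          - sig k rho (int r) * u r)
                        / (sig k rho (int r + int l) - sig k rho (int r))
                      = ext1 l alpha (int r + 1)"
    and slopeB: "\<forall>r<k. (sig k rho (int r + int m) * ext0 k u (int r + int m)
                          - sig k rho (int r) * v r)
                        / (sig k rho (int r + int m) - sig k rho (int r))
                      = - ext1 m beta (int r + 1)"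
    and omega_pos: "Min {alpha i + beta j | i j. i \<in> {1..l} \<and> j \<in> {1..m}} > 0"
    and cond: "\<forall>r<k. (psi k rho (int r) n + 1) / (psi k rho (int r) l + psi k rho (int r) m)
                 \<ge> Max {alpha i + beta j | i j. i \<in> {1..l} \<and> j \<in> {1..m}}
                   / Min {alpha i + beta j | i j. i \<in> {1..l} \<and> j \<in> {1..m}}"
  shows "(\<forall>r<k. v r \<ge> u r) \<and> proper_system n (Pfun l m rho u v)"
proof -
  interpret nu_graph k rho l m alpha beta u v
    using lpos mpos kdef rho_gt1 slopeA slopeB by unfold_locales (auto simp: lcm_pos_nat)
  define W where "W = {alpha i + beta j | i j. i \<in> {1..l} \<and> j \<in> {1..m}}"
  have "finite W"
    unfolding W_def by (intro finite_image_set2) auto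
  then have weights: "Min W \<le> alpha i + beta j \<and> alpha i + beta j \<le> Max W"
    if "i \<in> {1..l}" "j \<in> {1..m}" for i j
    using that by (auto simp: W_def intro: Min_le Max_ge)
  have psi_cond: "Max W * (\<psi> (int r) l + \<psi> (int r) m) \<le> Min W * (\<psi> (int r) (l + m) + 1)"
    if "r < k" for r
  proof -
    have "Max W / Min W \<le> (\<psi> (int r) (l + m) + 1) / (\<psi> (int r) l + \<psi> (int r) m)"
      using cond that unfolding ndef W_def[symmetric] by auto
    moreover have "0 < \<psi> (int r) l + \<psi> (int r) m"
      using psi_ge1[of "int r" l] psi_ge1[of "int r" m] by simp
    ultimately show ?thesis
      using omega_pos unfolding W_def[symmetric]
      by (simp add: divide_le_eq le_divide_eq field_simps)
  qed
  have uv: "\<forall>r<k. u r \<le> v r"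
    using u_le_v[OF weights psi_cond] by blast
  moreover have "proper_system n (Pfun l m rho u v)"
    unfolding ndef using alpha_nn beta_nn uv by (intro proper_system_Pfun) auto
  ultimately show ?thesis
    by simp
qed

end
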